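(* Let $N\ge1$, $h,\varepsilon\in(0,1)$, and let $\Phi$ be the opinion operator defined in the context. Let $P=(p_1,\dots,p_N)\in[-1,1]^N$ with $p_1\le\dots\le p_N$ be a fixed point of $\Phi$ that is not basic, i.e. not of the form $(-1,\dots,-1,1,\dots,1)$ (all entries in $\{-1,1\}$, allowing either block to be empty). Then either (i) every $p_k\in\{-1,0,1\}$, i.e. $P=(-1,\dots,-1,0,\dots,0,1,\dots,1)$; or (ii) there are indices $1\le a\le l<b\le m\le N$ such that $p_k=-1$ for $k<a$; $-\varepsilon<p_k<0$ for $a\le k\le l$; $p_k=0$ for $l<k<b$; $0<p_k<\varepsilon$ for $b\le k\le m$; $p_k=1$ for $k>m$; moreover $J(p_k)=\{a,a+1,\dots,m\}$ for every $k\in\{a,\dots,m\}$, and $p_a+p_{a+1}+\dots+p_m=0$.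
   Context: For $V=(v_1,\dots,v_N)\in[-1,1]^N$ and each $k$, let $J(v_k)=\{l\in\{1,\dots,N\}:|v_l-v_k|\le\varepsilon\}$ (computed within the array $V$) and $I(v_k)=|J(v_k)|$. Put $w_k(V)=v_k+\frac{h}{I(v_k)}\sum_{l\in J(v_k)}v_l$. Then $\Phi(V)=(v_1',\dots,v_N')$ where $v_k'=-1$ if $w_k<-1$, $v_k'=1$ if $w_k>1$, and $v_k'=w_k$ if $|w_k|\le1$. *)

theory Defs
  imports Complex_Main
begin

text \<open>Opinion vectors V = (v_1,...,v_N) are represented as functions nat => real,
  only the values at indices 1..N being relevant.\<close>

definition J :: "real \<Rightarrow> nat \<Rightarrow> (nat \<Rightarrow> real) \<Rightarrow> nat \<Rightarrow> nat set" where
  "J eps N v k = {l \<in> {1..N}. \<bar>v l - v k\<bar> \<le> eps}"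

definition I :: "real \<Rightarrow> nat \<Rightarrow> (nat \<Rightarrow> real) \<Rightarrow> nat \<Rightarrow> nat" where
  "I eps N v k = card (J eps N v k)"

definition w :: "real \<Rightarrow> real \<Rightarrow> nat \<Rightarrow> (nat \<Rightarrow> real) \<Rightarrow> nat \<Rightarrow> real" where
  "w h eps N v k = v k + h / real (I eps N v k) * (\<Sum>l\<in>J eps N v k. v l)"

definition Phi :: "real \<Rightarrow> real \<Rightarrow> nat \<Rightarrow> (nat \<Rightarrow> real) \<Rightarrow> nat \<Rightarrow> real" where
  "Phi h eps N v k = (if w h eps N v k < -1 then -1
                      else if w h eps N v k > 1 then 1
                      else w h eps N v k)"

end

theory Submission
  imports Defs
begin

text \<open>
  A fixed opinion strictly inside \<open>(-1, 1)\<close> (a moderate one) satisfies \<open>w\<^sub>k = p\<^sub>k\<close>, so the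
  opinions within \<open>\<epsilon>\<close> of it sum to zero. Hence every nonzero moderate opinion has a
  neighbour of opposite sign, and an extreme opinion \<open>\<plusminus>1\<close> can never be that neighbour.
  Let \<open>y > 0\<close> be the largest moderate opinion and \<open>z < 0\<close> the smallest moderate opinion in
  \<open>[y - \<epsilon>, y]\<close>. The neighbourhoods of \<open>z\<close> and \<open>y\<close> share the opinions in \<open>[z, z + \<epsilon>]\<close>;
  comparing their vanishing sums, the opinions in \<open>[z - \<epsilon>, z)\<close> (all negative) must balance
  the opinions in \<open>(z + \<epsilon>, y + \<epsilon>]\<close> (all equal to 1), so there are none of either. Thus all
  moderate opinions lie in \<open>[z, y]\<close>, a window of width at most \<open>\<epsilon>\<close> isolated from \<open>\<plusminus>1\<close>,
  and each of them has exactly the moderate opinions as neighbours. For a sorted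
  profile the moderate indices form a block \<open>a..m\<close>, which splits by sign.
\<close>

lemma finite_J: "finite (J eps N v k)"
  by (simp add: J_def)

lemma mem_J_iff: "l \<in> J eps N v k \<longleftrightarrow> l \<in> {1..N} \<and> \<bar>v l - v k\<bar> \<le> eps"
  by (simp add: J_def)

lemma self_mem_J: "k \<in> {1..N} \<Longrightarrow> 0 \<le> eps \<Longrightarrow> k \<in> J eps N v k"
  by (simp add: J_def)

lemma sum_J_eq_0_if_fixed:
  assumes "0 < h" "0 \<le> eps" "k \<in> {1..N}" "\<bar>v k\<bar> < 1" "Phi h eps N v k = v k"
  shows "(\<Sum>l\<in>J eps N v k. v l) = 0"
proof -
  have "0 < card (J eps N v k)"
    using finite_J[of eps N v k] self_mem_J[OF assms(3,2), of v] by (auto simp: card_gt_0_iff)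
  then have I_pos: "0 < real (I eps N v k)"
    by (simp add: I_def)
  have "w h eps N v k = v k"
    using assms(4,5) unfolding Phi_def by (auto split: if_splits)
  then have "h / real (I eps N v k) * (\<Sum>l\<in>J eps N v k. v l) = 0"
    by (simp add: w_def)
  then show ?thesis
    using assms(1) I_pos by simp
qed

lemma mono_on_sign_blocks:
  fixes f :: "nat \<Rightarrow> 'a::{linorder, zero}"
  assumes mono: "mono_on {a..m} f" and "a \<le> m" "f a < 0" "0 < f m"
  obtains l b where "a \<le> l" "l < b" "b \<le> m"
    "\<forall>k\<in>{a..l}. f k < 0" "\<forall>k\<in>{l<..<b}. f k = 0" "\<forall>k\<in>{b..m}. 0 < f k"
proof -
  define Neg where "Neg = {k\<in>{a..m}. f k < 0}"
  define Pos where "Pos = {k\<in>{a..m}. 0 < f k}"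
  have "a \<in> Neg" "m \<in> Pos"
    using assms(2-4) by (auto simp: Neg_def Pos_def)
  moreover have "finite Neg" "finite Pos"
    by (simp_all add: Neg_def Pos_def)
  ultimately have l: "Max Neg \<in> Neg" and b: "Min Pos \<in> Pos"
    by (auto intro!: Max_in Min_in)
  have l_max: "k \<le> Max Neg" if "k \<in> Neg" for k
    using that by (simp add: Neg_def)
  have b_min: "Min Pos \<le> k" if "k \<in> Pos" for k
    using that by (simp add: Pos_def)
  have "a \<le> Max Neg" "Min Pos \<le> m"
    using l b by (simp_all add: Neg_def Pos_def)
  moreover have "Max Neg < Min Pos"
  proof (rule ccontr)
    assume "\<not> Max Neg < Min Pos"
    then have "f (Min Pos) \<le> f (Max Neg)"
      using l b by (auto simp: Neg_def Pos_def intro: mono_onD[OF mono])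
    with l b show False
      by (auto simp: Neg_def Pos_def)
  qed
  moreover have "\<forall>k\<in>{a..Max Neg}. f k < 0"
  proof
    fix k assume "k \<in> {a..Max Neg}"
    with l have "f k \<le> f (Max Neg)"
      by (auto simp: Neg_def intro: mono_onD[OF mono])
    with l show "f k < 0"
      unfolding Neg_def by (blast intro: le_less_trans)
  qed
  moreover have "\<forall>k\<in>{Max Neg<..<Min Pos}. f k = 0"
  proof
    fix k assume k: "k \<in> {Max Neg<..<Min Pos}"
    with l b have "k \<in> {a..m}"
      by (auto simp: Neg_def Pos_def)
    moreover have "k \<notin> Neg" "k \<notin> Pos"
      using k l_max b_min by fastforce+
    ultimately show "f k = 0"
      by (auto simp: Neg_def Pos_def)
  qed
  moreover have "\<forall>k\<in>{Min Pos..m}. 0 < f k"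
  proof
    fix k assume "k \<in> {Min Pos..m}"
    with b have "f (Min Pos) \<le> f k"
      by (auto simp: Pos_def intro: mono_onD[OF mono])
    with b show "0 < f k"
      unfolding Pos_def by (blast intro: less_le_trans)
  qed
  ultimately show thesis
    by (intro that)
qed

locale opinion_fixed_point =
  fixes N :: nat and h eps :: real and p :: "nat \<Rightarrow> real"
  assumes h_pos: "0 < h" and eps_pos: "0 < eps" and eps_less_1: "eps < 1"
    and bounded: "\<And>k. k \<in> {1..N} \<Longrightarrow> \<bar>p k\<bar> \<le> 1"
    and fixed: "\<And>k. k \<in> {1..N} \<Longrightarrow> Phi h eps N p k = p k"
begin

definition moderate :: "nat set" where
  "moderate = {k\<in>{1..N}. \<bar>p k\<bar> < 1}"

lemma finite_moderate: "finite moderate"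
  by (simp add: moderate_def)

lemma moderate_subset: "moderate \<subseteq> {1..N}"
  by (auto simp: moderate_def)

lemma extreme_if_not_moderate: "k \<in> {1..N} \<Longrightarrow> k \<notin> moderate \<Longrightarrow> p k = -1 \<or> p k = 1"
  using bounded[of k] by (auto simp: moderate_def)

lemma sum_J_moderate: "k \<in> moderate \<Longrightarrow> (\<Sum>l\<in>J eps N p k. p l) = 0"
  using sum_J_eq_0_if_fixed[OF h_pos] eps_pos fixed by (simp add: moderate_def)

lemma moderate_neg_has_pos_neighbour:
  assumes "k \<in> moderate" "p k < 0"
  obtains l where "l \<in> J eps N p k" "0 < p l"
proof (rule ccontr)
  assume "\<not> thesis"
  with that have "0 < (\<Sum>l\<in>J eps N p k. - p l)"
    using assms moderate_subset eps_pos
    by (intro sum_pos2[OF finite_J self_mem_J]) (auto simp flip: not_less)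
  with sum_J_moderate[OF assms(1)] show False
    by (simp add: sum_negf)
qed

lemma moderate_pos_has_neg_neighbour:
  assumes "k \<in> moderate" "0 < p k"
  obtains l where "l \<in> J eps N p k" "p l < 0"
proof (rule ccontr)
  assume "\<not> thesis"
  with that have "0 < (\<Sum>l\<in>J eps N p k. p l)"
    using assms moderate_subset eps_pos
    by (intro sum_pos2[OF finite_J self_mem_J]) (auto simp flip: not_less)
  with sum_J_moderate[OF assms(1)] show False
    by simp
qed

lemma ex_moderate_pos:
  assumes "\<exists>k\<in>moderate. p k \<noteq> 0"
  shows "\<exists>k\<in>moderate. 0 < p k"
proof (rule ccontr)
  assume nonpos: "\<not> (\<exists>k\<in>moderate. 0 < p k)"
  with assms obtain k where k: "k \<in> moderate" "p k < 0"
    by force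
  then obtain l where l: "l \<in> J eps N p k" "0 < p l"
    by (rule moderate_neg_has_pos_neighbour)
  with nonpos have "p l = 1"
    using extreme_if_not_moderate[of l] by (force simp: mem_J_iff)
  with l k eps_less_1 show False
    by (simp add: mem_J_iff)
qed

lemma moderate_window:
  assumes "\<exists>k\<in>moderate. p k \<noteq> 0"
  obtains hi lo where "hi \<in> moderate" "\<forall>k\<in>moderate. p k \<le> p hi" "0 < p hi"
    "lo \<in> moderate" "p lo < 0" "p hi - eps \<le> p lo"
    "\<And>l. l \<in> {1..N} \<Longrightarrow> p hi - eps \<le> p l \<Longrightarrow> p lo \<le> p l"
proof -
  have "Max (p ` moderate) \<in> p ` moderate"
    using finite_moderate assms by (intro Max_in) auto
  then obtain hi where hi: "hi \<in> moderate" "p hi = Max (p ` moderate)"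
    by (metis imageE)
  then have hi_max: "\<forall>k\<in>moderate. p k \<le> p hi"
    using finite_moderate by simp
  have hi_pos: "0 < p hi"
    using ex_moderate_pos[OF assms] hi_max by force
  define Near where "Near = {l\<in>moderate. p hi - eps \<le> p l}"
  have "finite Near" "hi \<in> Near"
    using finite_moderate hi(1) eps_pos by (simp_all add: Near_def)
  then have "Min (p ` Near) \<in> p ` Near"
    by (intro Min_in) auto
  then obtain lo where lo: "lo \<in> Near" "p lo = Min (p ` Near)"
    by (metis imageE)
  then have lo_min: "\<forall>l\<in>Near. p lo \<le> p l"
    using \<open>finite Near\<close> by simp
  have lo_moderate: "lo \<in> moderate" and lo_near: "p hi - eps \<le> p lo"
    using lo by (simp_all add: Near_def)
  have lo_le: "p lo \<le> p l" if "l \<in> {1..N}" "p hi - eps \<le> p l" for l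
  proof (cases "l \<in> moderate")
    case True
    with lo_min that show ?thesis
      by (simp add: Near_def)
  next
    case False
    then have "p l = -1 \<or> p l = 1"
      using extreme_if_not_moderate that(1) by blast
    moreover have "\<bar>p lo\<bar> < 1"
      using lo_moderate by (simp add: moderate_def)
    ultimately show ?thesis
      using that(2) hi_pos eps_less_1 by auto
  qed
  obtain l where "l \<in> J eps N p hi" "p l < 0"
    using moderate_pos_has_neg_neighbour[OF hi(1) hi_pos] .
  then have "p lo < 0"
    using lo_le[of l] by (auto simp: mem_J_iff abs_le_iff)
  with hi(1) hi_max hi_pos lo_moderate lo_near lo_le show thesis
    using that by blast
qed

lemma moderate_gaps:
  assumes "\<exists>k\<in>moderate. p k \<noteq> 0"
  obtains y z where "0 < y" "\<forall>k\<in>moderate. p k \<le> y" "z < 0" "y \<le> z + eps"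
    "\<forall>l\<in>{1..N}. \<not> (z - eps \<le> p l \<and> p l < z)"
    "\<forall>l\<in>{1..N}. \<not> (z + eps < p l \<and> p l \<le> y + eps)"
proof -
  obtain hi lo where hi: "hi \<in> moderate" "\<forall>k\<in>moderate. p k \<le> p hi" "0 < p hi"
    and lo: "lo \<in> moderate" "p lo < 0" "p hi - eps \<le> p lo"
    and lo_le: "\<And>l. l \<in> {1..N} \<Longrightarrow> p hi - eps \<le> p l \<Longrightarrow> p lo \<le> p l"
    using moderate_window[OF assms] by blast
  define A where "A = {l\<in>{1..N}. p lo - eps \<le> p l \<and> p l < p lo}"
  define B where "B = {l\<in>{1..N}. p lo \<le> p l \<and> p l \<le> p lo + eps}"
  define C where "C = {l\<in>{1..N}. p lo + eps < p l \<and> p l \<le> p hi + eps}"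
  have finite: "finite A" "finite B" "finite C"
    by (simp_all add: A_def B_def C_def)
  have disjoint: "A \<inter> B = {}" "B \<inter> C = {}"
    by (auto simp: A_def B_def C_def)
  have "J eps N p lo = A \<union> B"
    by (auto simp: mem_J_iff abs_le_iff A_def B_def)
  then have sum_AB: "sum p A + sum p B = 0"
    using sum_J_moderate[OF lo(1)] finite disjoint by (simp add: sum.union_disjoint)
  have "p lo \<le> p hi"
    using hi(2) lo(1) by blast
  have "J eps N p hi = B \<union> C"
  proof (intro equalityI subsetI)
    fix l assume "l \<in> J eps N p hi"
    then have l: "l \<in> {1..N}" "p hi - eps \<le> p l" "p l \<le> p hi + eps"
      by (auto simp: mem_J_iff abs_le_iff)
    moreover have "p lo \<le> p l"
      using lo_le l by blast
    ultimately show "l \<in> B \<union> C"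
      by (auto simp: B_def C_def)
  next
    fix l assume "l \<in> B \<union> C"
    with lo(3) \<open>p lo \<le> p hi\<close> show "l \<in> J eps N p hi"
      by (auto simp: mem_J_iff abs_le_iff B_def C_def)
  qed
  then have sum_BC: "sum p B + sum p C = 0"
    using sum_J_moderate[OF hi(1)] finite disjoint by (simp add: sum.union_disjoint)
  have "p l = 1" if "l \<in> C" for l
  proof -
    have "p hi < p l"
      using that lo(3) by (simp add: C_def)
    then have "l \<notin> moderate"
      using hi(2) by force
    with that \<open>p hi < p l\<close> hi(3) show ?thesis
      using extreme_if_not_moderate[of l] by (force simp: C_def)
  qed
  then have sum_C: "sum p C = real (card C)"
    by simp
  have "A = {}"
  proof (rule ccontr)
    assume "A \<noteq> {}"
    then obtain k where "k \<in> A"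
      by blast
    then have "0 < (\<Sum>l\<in>A. - p l)"
      using lo(2) by (intro sum_pos2[OF finite(1) \<open>k \<in> A\<close>]) (auto simp: A_def)
    with sum_AB sum_BC sum_C show False
      by (simp add: sum_negf)
  qed
  then have "C = {}"
    using sum_AB sum_BC sum_C finite(3) by simp
  show thesis
  proof (rule that[of "p hi" "p lo"])
    show "\<forall>l\<in>{1..N}. \<not> (p lo - eps \<le> p l \<and> p l < p lo)"
      using \<open>A = {}\<close> by (auto simp: A_def)
    show "\<forall>l\<in>{1..N}. \<not> (p lo + eps < p l \<and> p l \<le> p hi + eps)"
      using \<open>C = {}\<close> by (auto simp: C_def)
  qed (use hi lo in auto)
qed

lemma J_eq_moderate:
  assumes nonzero: "\<exists>k\<in>moderate. p k \<noteq> 0" and k: "k \<in> moderate"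
  shows "J eps N p k = moderate"
proof -
  obtain y z where y: "0 < y" "\<forall>i\<in>moderate. p i \<le> y" and z: "z < 0" "y \<le> z + eps"
    and gap_below: "\<forall>l\<in>{1..N}. \<not> (z - eps \<le> p l \<and> p l < z)"
    and gap_above: "\<forall>l\<in>{1..N}. \<not> (z + eps < p l \<and> p l \<le> y + eps)"
    using moderate_gaps[OF nonzero] by blast
  have z_le: "z \<le> p i" if i: "i \<in> moderate" for i
  proof (rule ccontr)
    assume "\<not> z \<le> p i"
    moreover have "i \<in> {1..N}"
      using i moderate_subset by blast
    ultimately have "p i < z - eps"
      using gap_below by force
    moreover obtain l where "l \<in> J eps N p i" "0 < p l"
      using moderate_neg_has_pos_neighbour[OF i] \<open>p i < z - eps\<close> z(1) eps_pos by auto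
    ultimately show False
      using z(1) by (auto simp: mem_J_iff abs_le_iff)
  qed
  have k_range: "z \<le> p k" "p k \<le> y"
    using z_le y(2) k by auto
  show ?thesis
  proof (intro equalityI subsetI)
    fix l assume l: "l \<in> J eps N p k"
    then have l_range: "l \<in> {1..N}" "p k - eps \<le> p l" "p l \<le> p k + eps"
      by (auto simp: mem_J_iff abs_le_iff)
    have "\<not> (z - eps \<le> p l \<and> p l < z)" "\<not> (z + eps < p l \<and> p l \<le> y + eps)"
      using gap_below gap_above l_range(1) by blast+
    then have "z \<le> p l" "p l \<le> z + eps"
      using l_range(2,3) k_range by linarith+
    with l_range(1) z y(1) eps_less_1 show "l \<in> moderate"
      by (simp add: moderate_def abs_less_iff)
  next
    fix l assume "l \<in> moderate"
    then have "l \<in> {1..N}" "z \<le> p l" "p l \<le> y"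
      using moderate_subset z_le y(2) by auto
    with k_range z(2) show "l \<in> J eps N p k"
      by (simp add: mem_J_iff abs_le_iff)
  qed
qed

lemma sum_moderate_eq_0:
  assumes "\<exists>k\<in>moderate. p k \<noteq> 0"
  shows "sum p moderate = 0"
  using assms J_eq_moderate[OF assms] sum_J_moderate by force

lemma ex_moderate_neg:
  assumes "\<exists>k\<in>moderate. p k \<noteq> 0"
  shows "\<exists>k\<in>moderate. p k < 0"
proof (rule ccontr)
  assume "\<not> (\<exists>k\<in>moderate. p k < 0)"
  moreover obtain k where "k \<in> moderate" "0 < p k"
    using ex_moderate_pos[OF assms] by blast
  ultimately have "0 < sum p moderate"
    by (intro sum_pos2[OF finite_moderate]) (auto simp: not_less)
  with sum_moderate_eq_0[OF assms] show False
    by simp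
qed

lemma moderate_abs_less_eps:
  assumes nonzero: "\<exists>k\<in>moderate. p k \<noteq> 0" and k: "k \<in> moderate"
  shows "\<bar>p k\<bar> < eps"
proof -
  obtain kn kp where "kn \<in> moderate" "p kn < 0" "kp \<in> moderate" "0 < p kp"
    using ex_moderate_neg[OF nonzero] ex_moderate_pos[OF nonzero] by blast
  moreover have "k \<in> J eps N p kn" "k \<in> J eps N p kp"
    using J_eq_moderate[OF nonzero] k calculation by auto
  ultimately show ?thesis
    by (auto simp: mem_J_iff abs_le_iff)
qed

lemma sorted_moderate_block:
  assumes sorted: "mono_on {1..N} p" and nonzero: "\<exists>k\<in>moderate. p k \<noteq> 0"
  obtains a m where "1 \<le> a" "a \<le> m" "m \<le> N" "moderate = {a..m}"
    "\<forall>k\<in>{1..<a}. p k = -1" "\<forall>k\<in>{m<..N}. p k = 1" "p a < 0" "0 < p m"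
proof -
  define a where "a = Min moderate"
  define m where "m = Max moderate"
  have "moderate \<noteq> {}"
    using nonzero by blast
  then have a: "a \<in> moderate" and m: "m \<in> moderate"
    using finite_moderate by (simp_all add: a_def m_def)
  then have a_range: "1 \<le> a" "a \<le> N" "\<bar>p a\<bar> < 1" and m_range: "1 \<le> m" "m \<le> N" "\<bar>p m\<bar> < 1"
    by (simp_all add: moderate_def)
  have bounds: "a \<le> k" "k \<le> m" if "k \<in> moderate" for k
    using that finite_moderate by (simp_all add: a_def m_def)
  have "{a..m} \<subseteq> moderate"
  proof
    fix k assume k: "k \<in> {a..m}"
    then have "k \<in> {1..N}" "p a \<le> p k" "p k \<le> p m"
      using a_range m_range by (auto intro: mono_onD[OF sorted])
    with a_range(3) m_range(3) show "k \<in> moderate"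
      by (simp add: moderate_def abs_less_iff)
  qed
  then have block: "moderate = {a..m}"
    using bounds by fastforce
  have "p k = -1" if k: "k \<in> {1..<a}" for k
  proof -
    have "k \<in> {1..N}" "k \<notin> moderate"
      using k a_range(2) block by auto
    moreover have "p k \<le> p a"
      using k a_range by (auto intro: mono_onD[OF sorted])
    ultimately show ?thesis
      using extreme_if_not_moderate a_range(3) by force
  qed
  moreover have "p k = 1" if k: "k \<in> {m<..N}" for k
  proof -
    have "k \<in> {1..N}" "k \<notin> moderate"
      using k m_range(1) block by auto
    moreover have "p m \<le> p k"
      using k m_range by (auto intro: mono_onD[OF sorted])
    ultimately show ?thesis
      using extreme_if_not_moderate m_range(3) by force
  qed
  moreover have "p a < 0" "0 < p m"
  proof -
    obtain kn kp where "kn \<in> moderate" "p kn < 0" "kp \<in> moderate" "0 < p kp"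
      using ex_moderate_neg[OF nonzero] ex_moderate_pos[OF nonzero] by blast
    moreover have "p a \<le> p kn" "p kp \<le> p m"
      using calculation a m moderate_subset bounds by (auto intro!: mono_onD[OF sorted])
    ultimately show "p a < 0" "0 < p m"
      by simp_all
  qed
  ultimately show thesis
    using that a_range m_range block bounds[OF m] by blast
qed

lemma sorted_moderate_sign_blocks:
  assumes sorted: "mono_on {1..N} p" and nonzero: "\<exists>k\<in>moderate. p k \<noteq> 0"
  obtains a l b m where "1 \<le> a" "a \<le> l" "l < b" "b \<le> m" "m \<le> N" "moderate = {a..m}"
    "\<forall>k\<in>{1..<a}. p k = -1" "\<forall>k\<in>{a..l}. -eps < p k \<and> p k < 0" "\<forall>k\<in>{l<..<b}. p k = 0"
    "\<forall>k\<in>{b..m}. 0 < p k \<and> p k < eps" "\<forall>k\<in>{m<..N}. p k = 1"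
proof -
  obtain a m where bounds: "1 \<le> a" "a \<le> m" "m \<le> N" and block: "moderate = {a..m}"
    and extremes: "\<forall>k\<in>{1..<a}. p k = -1" "\<forall>k\<in>{m<..N}. p k = 1"
    and ends: "p a < 0" "0 < p m"
    using sorted_moderate_block[OF sorted nonzero] by blast
  have "mono_on {a..m} p"
    using sorted by (rule mono_on_subset) (use bounds in auto)
  then obtain l b where signs: "a \<le> l" "l < b" "b \<le> m"
    "\<forall>k\<in>{a..l}. p k < 0" "\<forall>k\<in>{l<..<b}. p k = 0" "\<forall>k\<in>{b..m}. 0 < p k"
    using mono_on_sign_blocks bounds(2) ends by blast
  have small: "-eps < p k \<and> p k < eps" if "k \<in> {a..m}" for k
  proof -
    have "\<bar>p k\<bar> < eps"
      using moderate_abs_less_eps[OF nonzero] that block by blast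
    then show ?thesis
      by linarith
  qed
  have "\<forall>k\<in>{a..l}. -eps < p k \<and> p k < 0" "\<forall>k\<in>{b..m}. 0 < p k \<and> p k < eps"
    using signs small by auto
  with bounds block extremes signs show thesis
    using that by blast
qed

end

theorem theorem2:
  fixes N :: nat and h eps :: real and p :: "nat \<Rightarrow> real"
  assumes "N \<ge> 1"
    and "0 < h" "h < 1" "0 < eps" "eps < 1"
    and "\<forall>k\<in>{1..N}. -1 \<le> p k \<and> p k \<le> 1"
    and "\<forall>k\<in>{1..N}. \<forall>k'\<in>{1..N}. k \<le> k' \<longrightarrow> p k \<le> p k'"
    and "\<forall>k\<in>{1..N}. Phi h eps N p k = p k"
    and "\<not> (\<exists>c\<le>N. (\<forall>k\<in>{1..c}. p k = -1) \<and> (\<forall>k\<in>{c<..N}. p k = 1))"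
  shows "(\<forall>k\<in>{1..N}. p k \<in> {-1, 0, 1}) \<or>
         (\<exists>a l b m. 1 \<le> a \<and> a \<le> l \<and> l < b \<and> b \<le> m \<and> m \<le> N \<and>
            (\<forall>k\<in>{1..<a}. p k = -1) \<and>
            (\<forall>k\<in>{a..l}. -eps < p k \<and> p k < 0) \<and>
            (\<forall>k\<in>{l<..<b}. p k = 0) \<and>
            (\<forall>k\<in>{b..m}. 0 < p k \<and> p k < eps) \<and>
            (\<forall>k\<in>{m<..N}. p k = 1) \<and>
            (\<forall>k\<in>{a..m}. J eps N p k = {a..m}) \<and>
            (\<Sum>k=a..m. p k) = 0)"
proof -
  interpret opinion_fixed_point N h eps p
    using assms(2,4-6,8) by unfold_locales (auto simp: abs_le_iff)
  show ?thesis
  proof (cases "\<exists>k\<in>moderate. p k \<noteq> 0")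
    case False
    \<comment> \<open>This covers the basic fixed points too.\<close>
    have "p k \<in> {-1, 0, 1}" if "k \<in> {1..N}" for k
      using False extreme_if_not_moderate[OF that] by (cases "k \<in> moderate") auto
    then show ?thesis
      by blast
  next
    case True
    have "mono_on {1..N} p"
      using assms(7) by (auto intro: mono_onI)
    then obtain a l b m where "1 \<le> a" "a \<le> l" "l < b" "b \<le> m" "m \<le> N"
      and block: "moderate = {a..m}"
      and "\<forall>k\<in>{1..<a}. p k = -1" "\<forall>k\<in>{a..l}. -eps < p k \<and> p k < 0" "\<forall>k\<in>{l<..<b}. p k = 0"
        "\<forall>k\<in>{b..m}. 0 < p k \<and> p k < eps" "\<forall>k\<in>{m<..N}. p k = 1"
      using sorted_moderate_sign_blocks[OF _ True] by blast
    moreover have "\<forall>k\<in>{a..m}. J eps N p k = {a..m}"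
      using J_eq_moderate[OF True] block by auto
    moreover have "(\<Sum>k=a..m. p k) = 0"
      using sum_moderate_eq_0[OF True] block by simp
    ultimately show ?thesis
      by blast
  qed
qed

end
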